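(* Let $G$ be a graph on $n$ vertices and $A\in\mathcal{S}(G)$ a matrix with the SAP and $\operatorname{pin}(A)=(a,b)$ where $a+b<n$. Then each of the partial inertias $(a+1,b)$ and $(a,b+1)$ is attained by some matrix $A'\in\mathcal{S}(G)$ with the SAP.
   Context: For a graph $G$ on vertex set $\{1,\ldots,n\}$, $\mathcal{S}(G)$ is the set of real symmetric $n\times n$ matrices whose $(i,j)$-entry for $i\neq j$ is nonzero if and only if $\{i,j\}$ is an edge (diagonal entries arbitrary). The partial inertia of a symmetric matrix is $\operatorname{pin}(A)=(n_+(A),n_-(A))$, the numbers of positive and negative eigenvalues. $\circ$ is the entrywise product. A symmetric matrix $A$ has the strong Arnol'd property (SAP) if $X=O$ is the only real symmetric matrix with $A\circ X=O$, $I\circ X=O$, $AX=O$. *)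

theory Defs
  imports "Jordan_Normal_Form.Char_Poly"
begin

text \<open>Graphs on vertex set {0..<n} (0-indexed instead of 1..n), given by an edge
predicate E that is symmetric and loopless on the vertex set.\<close>

definition simple_graph_on :: "nat \<Rightarrow> (nat \<Rightarrow> nat \<Rightarrow> bool) \<Rightarrow> bool" where
  "simple_graph_on n E \<longleftrightarrow>
     (\<forall>i<n. \<forall>j<n. E i j \<longleftrightarrow> E j i) \<and> (\<forall>i<n. \<not> E i i)"

definition sym_mat :: "nat \<Rightarrow> real mat \<Rightarrow> bool" where
  "sym_mat n A \<longleftrightarrow> A \<in> carrier_mat n n \<and> transpose_mat A = A"

definition S_G :: "nat \<Rightarrow> (nat \<Rightarrow> nat \<Rightarrow> bool) \<Rightarrow> real mat set" where
  "S_G n E = {A. sym_mat n A \<and>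
      (\<forall>i<n. \<forall>j<n. i \<noteq> j \<longrightarrow> (A $$ (i,j) \<noteq> 0 \<longleftrightarrow> E i j))}"

definition hadamard :: "real mat \<Rightarrow> real mat \<Rightarrow> real mat" (infixl "\<circ>\<^sub>H" 70) where
  "A \<circ>\<^sub>H B = mat (dim_row A) (dim_col A) (\<lambda>(i,j). A $$ (i,j) * B $$ (i,j))"

definition n_plus :: "real mat \<Rightarrow> nat" where
  "n_plus A = (\<Sum>x\<in>{x. poly (char_poly A) x = 0 \<and> x > 0}. order x (char_poly A))"

definition n_minus :: "real mat \<Rightarrow> nat" where
  "n_minus A = (\<Sum>x\<in>{x. poly (char_poly A) x = 0 \<and> x < 0}. order x (char_poly A))"

definition pin :: "real mat \<Rightarrow> nat \<times> nat" where
  "pin A = (n_plus A, n_minus A)"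

definition SAP :: "nat \<Rightarrow> real mat \<Rightarrow> bool" where
  "SAP n A \<longleftrightarrow> (\<forall>X. sym_mat n X \<and> A \<circ>\<^sub>H X = 0\<^sub>m n n \<and> 1\<^sub>m n \<circ>\<^sub>H X = 0\<^sub>m n n
                     \<and> A * X = 0\<^sub>m n n \<longrightarrow> X = 0\<^sub>m n n)"

end

theory Submission
  imports Defs
begin

text \<open>
  If \<open>a + b < n\<close>, then \<open>A\<close> is singular, so it has a unit eigenvector \<open>v\<close> for the eigenvalue
  \<open>0\<close>; pick a vertex \<open>i\<close> with \<open>v\<^sub>i \<noteq> 0\<close>. Changing the diagonal entry \<open>A\<^sub>i\<^sub>i\<close> by \<open>\<pm>1\<close> keeps
  the matrix in \<open>S(G)\<close>. For \<open>A + E\<^sub>i\<^sub>i\<close>, the quadratic form is positive definite on the span of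
  \<open>v\<close> and the eigenvectors of positive eigenvalues of \<open>A\<close>, and nonpositive on a complement of
  dimension \<open>n - a - 1\<close> (eigenvectors of nonpositive eigenvalues other than \<open>v\<close>, corrected by
  multiples of \<open>v\<close> so that their \<open>i\<close>-th coordinate vanishes); this pins the number of positive
  eigenvalues to \<open>a + 1\<close>, and similarly the number of negative ones stays \<open>b\<close>. The case
  \<open>A - E\<^sub>i\<^sub>i\<close> is the same argument for \<open>-A\<close>. Finally, if \<open>X\<close> certifies the failure of the SAP for
  \<open>A \<pm> E\<^sub>i\<^sub>i\<close>, then multiplying \<open>(A \<pm> E\<^sub>i\<^sub>i) X = 0\<close> by \<open>v\<^sup>T\<close> kills row \<open>i\<close> of \<open>X\<close>, so \<open>X\<close>
  certifies the failure of the SAP for \<open>A\<close> as well.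
\<close>

section \<open>Counting eigenvalues through subspaces\<close>

lemma homogeneous_system_nontrivial_solution:
  fixes g :: "'b \<Rightarrow> 'a \<Rightarrow> real" and S :: "'b set" and J :: "'a set"
  assumes "finite S" "finite J" "card S < card J"
  shows "\<exists>c. (\<exists>j\<in>J. c j \<noteq> 0) \<and> (\<forall>l\<in>S. (\<Sum>j\<in>J. g l j * c j) = 0)"
  using assms
proof (induction S arbitrary: J g rule: finite_induct)
  case empty
  then obtain j where "j \<in> J" by fastforce
  then show ?case by (intro exI[of _ "\<lambda>x. if x = j then 1 else 0"]) auto
next
  case (insert l S J g)
  show ?case
  proof (cases "\<forall>j\<in>J. g l j = 0")
    case True
    from insert.IH[of J g] insert.prems obtain c where
      c: "\<exists>j\<in>J. c j \<noteq> 0" "\<forall>l\<in>S. (\<Sum>j\<in>J. g l j * c j) = 0"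
      using insert.hyps by auto
    show ?thesis using c True by (intro exI[of _ c]) auto
  next
    case False
    then obtain j1 where j1: "j1 \<in> J" "g l j1 \<noteq> 0" by auto
    define J' where "J' = J - {j1}"
    \<comment> \<open>Gaussian elimination of the unknown \<open>j1\<close> using the equation \<open>l\<close>.\<close>
    define g' where "g' = (\<lambda>l' j. g l' j - g l' j1 * g l j / g l j1)"
    have cJ': "card S < card J'" using insert.prems insert.hyps j1 unfolding J'_def
      by (simp add: card_Diff_singleton)
    have fJ': "finite J'" using insert.prems unfolding J'_def by auto
    from insert.IH[OF fJ' cJ', of g'] obtain c' where
      c': "\<exists>j\<in>J'. c' j \<noteq> 0" "\<forall>l'\<in>S. (\<Sum>j\<in>J'. g' l' j * c' j) = 0" by auto
    define c where "c = c'(j1 := - (\<Sum>j\<in>J'. g l j * c' j) / g l j1)"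
    have sumJ: "(\<Sum>j\<in>J. f j * c j) = f j1 * c j1 + (\<Sum>j\<in>J'. f j * c' j)" for f
    proof -
      have "(\<Sum>j\<in>J. f j * c j) = f j1 * c j1 + (\<Sum>j\<in>J'. f j * c j)"
        unfolding J'_def using j1 insert.prems by (simp add: sum.remove)
      also have "(\<Sum>j\<in>J'. f j * c j) = (\<Sum>j\<in>J'. f j * c' j)"
        by (rule sum.cong) (auto simp: c_def J'_def)
      finally show ?thesis .
    qed
    have "\<exists>j\<in>J. c j \<noteq> 0" using c' by (auto simp: c_def J'_def)
    moreover have "(\<Sum>j\<in>J. g l j * c j) = 0"
      unfolding sumJ using j1 by (simp add: c_def)
    moreover have "(\<Sum>j\<in>J. g l' j * c j) = 0" if l': "l' \<in> S" for l'
    proof -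
      have "(\<Sum>j\<in>J'. g' l' j * c' j)
          = (\<Sum>j\<in>J'. g l' j * c' j) - g l' j1 / g l j1 * (\<Sum>j\<in>J'. g l j * c' j)"
        unfolding g'_def by (simp add: sum_subtractf sum_distrib_left algebra_simps)
      with c'(2) l' have "(\<Sum>j\<in>J'. g l' j * c' j) = g l' j1 / g l j1 * (\<Sum>j\<in>J'. g l j * c' j)"
        by auto
      then show ?thesis unfolding sumJ using j1 by (simp add: c_def field_simps)
    qed
    ultimately show ?thesis by (intro exI[of _ c]) auto
  qed
qed

lemma sum_mult_combination_swap:
  fixes R :: "nat \<Rightarrow> nat \<Rightarrow> real"
  shows "(\<Sum>r<n. R r l * (\<Sum>j\<in>J. c j * u j r)) = (\<Sum>j\<in>J. (\<Sum>r<n. R r l * u j r) * c j)"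
proof -
  have "(\<Sum>r<n. R r l * (\<Sum>j\<in>J. c j * u j r)) = (\<Sum>r<n. \<Sum>j\<in>J. R r l * u j r * c j)"
    by (simp add: sum_distrib_left mult_ac)
  also have "\<dots> = (\<Sum>j\<in>J. \<Sum>r<n. R r l * u j r * c j)" by (rule sum.swap)
  also have "\<dots> = (\<Sum>j\<in>J. (\<Sum>r<n. R r l * u j r) * c j)" by (simp add: sum_distrib_right)
  finally show ?thesis .
qed

lemma card_filter_add_card_filter_not: "card {l. l < (n::nat) \<and> p l} + card {l. l < n \<and> \<not> p l} = n"
proof -
  have "card {l. l < n \<and> p l} + card {l. l < n \<and> \<not> p l}
      = card ({l. l < n \<and> p l} \<union> {l. l < n \<and> \<not> p l})"
    by (rule card_Un_disjoint[symmetric]) auto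
  also have "{l. l < n \<and> p l} \<union> {l. l < n \<and> \<not> p l} = {..<n}" by auto
  finally show ?thesis by simp
qed

text \<open>
  In the next two lemmas \<open>\<Sum>l<n. \<mu> l * (\<Sum>r<n. R r l * x r)\<^sup>2\<close> is a quadratic form written in an
  eigenbasis (\<open>\<mu>\<close> the eigenvalues, the columns of \<open>R\<close> the eigenvectors), and \<open>x\<close> ranges over the
  span of the vectors \<open>u j\<close>, \<open>j \<in> J\<close>. They are the two halves of Sylvester's law of inertia.
\<close>

lemma card_le_card_pos_if_pos_on_span:
  fixes R :: "nat \<Rightarrow> nat \<Rightarrow> real" and \<mu> :: "nat \<Rightarrow> real"
  assumes fJ: "finite J"
    and pos: "\<And>c. (\<exists>j\<in>J. c j \<noteq> 0) \<Longrightarrow>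
       (\<Sum>l<n. \<mu> l * (\<Sum>r<n. R r l * (\<Sum>j\<in>J. c j * u j r))^2) > 0"
  shows "card J \<le> card {l. l < n \<and> \<mu> l > 0}"
proof (rule ccontr)
  assume "\<not> ?thesis"
  hence lt: "card {l. l < n \<and> \<mu> l > 0} < card J" by simp
  have fS: "finite {l. l < n \<and> \<mu> l > 0}" by auto
  from homogeneous_system_nontrivial_solution[OF fS fJ lt, of "\<lambda>l j. (\<Sum>r<n. R r l * u j r)"]
  obtain c where c: "\<exists>j\<in>J. c j \<noteq> 0"
    "\<forall>l\<in>{l. l < n \<and> \<mu> l > 0}. (\<Sum>j\<in>J. (\<Sum>r<n. R r l * u j r) * c j) = 0"
    by auto
  have "(\<Sum>l<n. \<mu> l * (\<Sum>r<n. R r l * (\<Sum>j\<in>J. c j * u j r))^2) \<le> 0"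
  proof (rule sum_nonpos)
    fix l assume l: "l \<in> {..<n}"
    show "\<mu> l * (\<Sum>r<n. R r l * (\<Sum>j\<in>J. c j * u j r))^2 \<le> 0"
    proof (cases "\<mu> l > 0")
      case True
      then show ?thesis using c(2) l unfolding sum_mult_combination_swap by auto
    next
      case False
      then show ?thesis by (simp add: mult_nonpos_nonneg)
    qed
  qed
  with pos[OF c(1)] show False by simp
qed

lemma card_pos_add_card_le_if_nonpos_on_span:
  fixes R :: "nat \<Rightarrow> nat \<Rightarrow> real" and \<mu> :: "nat \<Rightarrow> real"
  assumes fJ: "finite J"
    and orth: "\<And>r r'. r < n \<Longrightarrow> r' < n \<Longrightarrow>
      (\<Sum>l<n. R r l * R r' l) = (if r = r' then 1 else 0)"
    and indep: "\<And>c. (\<exists>j\<in>J. c j \<noteq> 0) \<Longrightarrow> \<exists>r<n. (\<Sum>j\<in>J. c j * u j r) \<noteq> 0"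
    and nonpos: "\<And>c. (\<Sum>l<n. \<mu> l * (\<Sum>r<n. R r l * (\<Sum>j\<in>J. c j * u j r))^2) \<le> 0"
  shows "card {l. l < n \<and> \<mu> l > 0} + card J \<le> n"
proof (rule ccontr)
  let ?S = "{l. l < n \<and> \<not> \<mu> l > 0}"
  assume "\<not> ?thesis"
  with card_filter_add_card_filter_not[of n "\<lambda>l. \<mu> l > 0"] have lt: "card ?S < card J" by simp
  have fS: "finite ?S" by auto
  from homogeneous_system_nontrivial_solution[OF fS fJ lt, of "\<lambda>l j. (\<Sum>r<n. R r l * u j r)"]
  obtain c where c: "\<exists>j\<in>J. c j \<noteq> 0"
    "\<forall>l\<in>?S. (\<Sum>j\<in>J. (\<Sum>r<n. R r l * u j r) * c j) = 0"
    by auto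
  define x where "x = (\<lambda>r. \<Sum>j\<in>J. c j * u j r)"
  define w where "w = (\<lambda>l. \<Sum>r<n. R r l * x r)"
  from indep[OF c(1)] obtain r0 where r0: "r0 < n" "x r0 \<noteq> 0" unfolding x_def by auto
  have w0: "w l = 0" if "l < n" "\<not> \<mu> l > 0" for l
    using c(2) that unfolding w_def x_def sum_mult_combination_swap by auto
  have "x r0 = (\<Sum>l<n. R r0 l * w l)"
  proof -
    have "(\<Sum>l<n. R r0 l * w l) = (\<Sum>l<n. \<Sum>r<n. R r0 l * R r l * x r)"
      unfolding w_def by (simp add: sum_distrib_left mult_ac)
    also have "\<dots> = (\<Sum>r<n. \<Sum>l<n. R r0 l * R r l * x r)" by (rule sum.swap)
    also have "\<dots> = (\<Sum>r<n. (\<Sum>l<n. R r0 l * R r l) * x r)" by (simp add: sum_distrib_right)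
    also have "\<dots> = (\<Sum>r<n. (if r0 = r then x r else 0))"
      by (rule sum.cong) (auto simp: orth r0)
    also have "\<dots> = x r0" using r0 by simp
    finally show ?thesis by simp
  qed
  with r0 obtain l where l: "l < n" "w l \<noteq> 0"
    by (metis (no_types, lifting) mult_zero_right sum.neutral lessThan_iff)
  with w0 have ml: "\<mu> l > 0" by force
  have "(\<Sum>l<n. \<mu> l * (w l)^2) > 0"
  proof (rule sum_pos2[of "{..<n}" l])
    show "\<mu> l * (w l)^2 > 0" using ml l by simp
    fix i assume "i \<in> {..<n}"
    then show "\<mu> i * (w i)^2 \<ge> 0" using w0[of i] by (cases "\<mu> i > 0") auto
  qed (use l in auto)
  with nonpos[of c] show False unfolding w_def x_def by simp
qed

section \<open>Spectral decomposition of real symmetric matrices\<close>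

definition diag_fun_mat :: "nat \<Rightarrow> (nat \<Rightarrow> real) \<Rightarrow> real mat" where
  "diag_fun_mat n \<mu> = mat n n (\<lambda>(r,c). if r = c then \<mu> r else 0)"

definition orthonormal_mat :: "nat \<Rightarrow> real mat \<Rightarrow> bool" where
  "orthonormal_mat n R \<longleftrightarrow>
     R \<in> carrier_mat n n \<and> transpose_mat R * R = 1\<^sub>m n \<and> R * transpose_mat R = 1\<^sub>m n"

definition spectral_decomp :: "nat \<Rightarrow> real mat \<Rightarrow> real mat \<Rightarrow> (nat \<Rightarrow> real) \<Rightarrow> bool" where
  "spectral_decomp n A R \<mu> \<longleftrightarrow> orthonormal_mat n R \<and> A = R * diag_fun_mat n \<mu> * transpose_mat R"

definition linear_factors :: "nat \<Rightarrow> (nat \<Rightarrow> real) \<Rightarrow> real poly" where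
  "linear_factors n \<mu> = (\<Prod>a \<leftarrow> map \<mu> [0..<n]. [:- a, 1:])"

lemma linear_factors_Suc: "linear_factors (Suc n) \<mu> = linear_factors n \<mu> * [:- \<mu> n, 1:]"
  unfolding linear_factors_def by simp

lemma linear_factors_nonzero: "linear_factors n \<mu> \<noteq> 0"
proof (induction n)
  case (Suc n)
  have "[:- \<mu> n, 1:] \<noteq> 0" by simp
  with Suc show ?case unfolding linear_factors_Suc by (simp only: mult_eq_0_iff) simp
qed (simp add: linear_factors_def)

lemma poly_linear_factors_eq_0_iff: "poly (linear_factors n \<mu>) x = 0 \<longleftrightarrow> (\<exists>l<n. \<mu> l = x)"
  by (induction n) (auto simp: linear_factors_def less_Suc_eq)

lemma order_linear_factors: "order x (linear_factors n \<mu>) = card {l. l < n \<and> \<mu> l = x}"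
proof (induction n)
  case 0 then show ?case by (simp add: linear_factors_def)
next
  case (Suc n)
  have "order x (linear_factors (Suc n) \<mu>) = order x (linear_factors n \<mu>) + order x [:- \<mu> n, 1:]"
    unfolding linear_factors_Suc
    by (rule order_mult) (use linear_factors_nonzero[of "Suc n" \<mu>] in \<open>simp add: linear_factors_Suc\<close>)
  also have "order x [:- \<mu> n, 1:] = (if \<mu> n = x then 1 else 0)"
    using order_power_n_n[of x 1] by (auto simp: order_0I)
  also have "order x (linear_factors n \<mu>) = card {l. l < n \<and> \<mu> l = x}" by (rule Suc.IH)
  also have "card {l. l < n \<and> \<mu> l = x} + (if \<mu> n = x then 1 else 0) = card {l. l < Suc n \<and> \<mu> l = x}"
  proof (cases "\<mu> n = x")
    case True
    have "{l. l < Suc n \<and> \<mu> l = x} = insert n {l. l < n \<and> \<mu> l = x}"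
      using True by (auto simp: less_Suc_eq)
    then show ?thesis using True by simp
  next
    case False
    have "{l. l < Suc n \<and> \<mu> l = x} = {l. l < n \<and> \<mu> l = x}" using False by (auto simp: less_Suc_eq)
    then show ?thesis using False by simp
  qed
  finally show ?case .
qed

lemma sum_order_linear_factors:
  "(\<Sum>x\<in>{x. poly (linear_factors n \<mu>) x = 0 \<and> Q x}. order x (linear_factors n \<mu>))
     = card {l. l < n \<and> Q (\<mu> l)}"
proof -
  let ?X = "\<mu> ` {l. l < n \<and> Q (\<mu> l)}"
  have X: "{x. poly (linear_factors n \<mu>) x = 0 \<and> Q x} = ?X"
    unfolding poly_linear_factors_eq_0_iff by auto
  have "(\<Sum>x\<in>?X. order x (linear_factors n \<mu>)) = (\<Sum>x\<in>?X. card {l. l < n \<and> \<mu> l = x})"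
    by (simp add: order_linear_factors)
  also have "\<dots> = card (\<Union>x\<in>?X. {l. l < n \<and> \<mu> l = x})"
    by (rule card_UN_disjoint[symmetric]) auto
  also have "(\<Union>x\<in>?X. {l. l < n \<and> \<mu> l = x}) = {l. l < n \<and> Q (\<mu> l)}" by auto
  finally show ?thesis unfolding X .
qed

lemma char_poly_spectral_decomp:
  assumes "spectral_decomp n A R \<mu>"
  shows "char_poly A = linear_factors n \<mu>"
proof -
  from assms have R: "R \<in> carrier_mat n n"
    and RR: "transpose_mat R * R = 1\<^sub>m n" "R * transpose_mat R = 1\<^sub>m n"
    and A: "A = R * diag_fun_mat n \<mu> * transpose_mat R"
    unfolding spectral_decomp_def orthonormal_mat_def by auto
  have D: "diag_fun_mat n \<mu> \<in> carrier_mat n n" unfolding diag_fun_mat_def by auto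
  have "similar_mat_wit A (diag_fun_mat n \<mu>) R (transpose_mat R)"
    unfolding similar_mat_wit_def Let_def using R RR A D by auto
  hence "similar_mat A (diag_fun_mat n \<mu>)" unfolding similar_mat_def by blast
  hence "char_poly A = char_poly (diag_fun_mat n \<mu>)" by (rule char_poly_similar)
  also have "\<dots> = (\<Prod>a \<leftarrow> diag_mat (diag_fun_mat n \<mu>). [:- a, 1:])"
    by (rule char_poly_upper_triangular[OF D]) (auto simp: upper_triangular_def diag_fun_mat_def)
  also have "diag_mat (diag_fun_mat n \<mu>) = map \<mu> [0..<n]"
    unfolding diag_mat_def diag_fun_mat_def by (auto intro: nth_equalityI)
  finally show ?thesis unfolding linear_factors_def .
qed

lemma n_plus_spectral_decomp:
  "spectral_decomp n A R \<mu> \<Longrightarrow> n_plus A = card {l. l < n \<and> \<mu> l > 0}"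
  unfolding n_plus_def using sum_order_linear_factors[of n \<mu> "\<lambda>x. x > 0"]
  by (simp add: char_poly_spectral_decomp)

lemma n_minus_spectral_decomp:
  "spectral_decomp n A R \<mu> \<Longrightarrow> n_minus A = card {l. l < n \<and> \<mu> l < 0}"
  unfolding n_minus_def using sum_order_linear_factors[of n \<mu> "\<lambda>x. x < 0"]
  by (simp add: char_poly_spectral_decomp)

lemma index_mult_mat_sum:
  assumes "A \<in> carrier_mat n k" "B \<in> carrier_mat k m" "r < n" "c < m"
  shows "(A * B) $$ (r,c) = (\<Sum>l<k. A $$ (r,l) * B $$ (l,c))"
  using assms by (simp add: scalar_prod_def atLeast0LessThan)

lemma index_diag_conj:
  assumes R: "R \<in> carrier_mat n n" and r: "r < n" and c: "c < n"
  shows "(R * diag_fun_mat n \<mu> * transpose_mat R) $$ (r,c) = (\<Sum>l<n. R $$ (r,l) * \<mu> l * R $$ (c,l))"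
proof -
  have D: "diag_fun_mat n \<mu> \<in> carrier_mat n n" unfolding diag_fun_mat_def by simp
  have RD: "(R * diag_fun_mat n \<mu>) $$ (r,l) = R $$ (r,l) * \<mu> l" if "r < n" "l < n" for r l
  proof -
    have "(R * diag_fun_mat n \<mu>) $$ (r,l) = (\<Sum>j<n. R $$ (r,j) * (if j = l then \<mu> j else 0))"
      using index_mult_mat_sum[OF R D that] that unfolding diag_fun_mat_def by simp
    also have "\<dots> = (\<Sum>j<n. (if j = l then R $$ (r,j) * \<mu> j else 0))"
      by (intro sum.cong refl) auto
    also have "\<dots> = R $$ (r,l) * \<mu> l" using that by simp
    finally show ?thesis .
  qed
  have "(R * diag_fun_mat n \<mu> * transpose_mat R) $$ (r,c)
      = (\<Sum>l<n. (R * diag_fun_mat n \<mu>) $$ (r,l) * transpose_mat R $$ (l,c))"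
    by (rule index_mult_mat_sum[OF mult_carrier_mat[OF R D] _ r c]) (use R in simp)
  also have "\<dots> = (\<Sum>l<n. R $$ (r,l) * \<mu> l * R $$ (c,l))"
    by (intro sum.cong refl) (use R r c RD in simp)
  finally show ?thesis .
qed

lemma orthonormal_mat_cols:
  assumes "orthonormal_mat n R" "l < n" "l' < n"
  shows "(\<Sum>r<n. R $$ (r,l) * R $$ (r,l')) = (if l = l' then 1 else 0)"
proof -
  from assms(1) have R: "R \<in> carrier_mat n n" and "transpose_mat R * R = 1\<^sub>m n"
    unfolding orthonormal_mat_def by auto
  moreover have "(transpose_mat R * R) $$ (l,l') = (\<Sum>r<n. R $$ (r,l) * R $$ (r,l'))"
    using index_mult_mat_sum[of "transpose_mat R" n n R n l l'] R assms(2,3) by simp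
  ultimately show ?thesis using assms(2,3) by simp
qed

lemma orthonormal_mat_rows:
  assumes "orthonormal_mat n R" "r < n" "r' < n"
  shows "(\<Sum>l<n. R $$ (r,l) * R $$ (r',l)) = (if r = r' then 1 else 0)"
proof -
  from assms(1) have R: "R \<in> carrier_mat n n" and "R * transpose_mat R = 1\<^sub>m n"
    unfolding orthonormal_mat_def by auto
  moreover have "(R * transpose_mat R) $$ (r,r') = (\<Sum>l<n. R $$ (r,l) * R $$ (r',l))"
    using index_mult_mat_sum[of R n n "transpose_mat R" n r r'] R assms(2,3) by simp
  ultimately show ?thesis using assms(2,3) by simp
qed

lemma orthonormal_matI_cols:
  assumes R: "R \<in> carrier_mat n n"
    and cols: "\<And>l l'. l < n \<Longrightarrow> l' < n \<Longrightarrow> (\<Sum>r<n. R $$ (r,l) * R $$ (r,l')) = (if l = l' then 1 else 0)"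
  shows "orthonormal_mat n R"
proof -
  have "transpose_mat R * R = 1\<^sub>m n"
  proof (intro eq_matI)
    fix l l' assume "l < dim_row (1\<^sub>m n)" "l' < dim_col (1\<^sub>m n)"
    then show "(transpose_mat R * R) $$ (l,l') = 1\<^sub>m n $$ (l,l')"
      using index_mult_mat_sum[of "transpose_mat R" n n R n l l'] R cols[of l l'] by simp
  qed (use R in auto)
  moreover from this have "R * transpose_mat R = 1\<^sub>m n"
    by (rule mat_mult_left_right_inverse[rotated 2]) (use R in auto)
  ultimately show ?thesis unfolding orthonormal_mat_def using R by blast
qed

lemma spectral_decomp_entries:
  assumes "spectral_decomp n A R \<mu>"
  shows "R \<in> carrier_mat n n" "A \<in> carrier_mat n n"
    "\<And>r c. r < n \<Longrightarrow> c < n \<Longrightarrow> A $$ (r,c) = (\<Sum>l<n. R $$ (r,l) * \<mu> l * R $$ (c,l))"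
    "\<And>l l'. l < n \<Longrightarrow> l' < n \<Longrightarrow> (\<Sum>r<n. R $$ (r,l) * R $$ (r,l')) = (if l = l' then 1 else 0)"
    "\<And>r r'. r < n \<Longrightarrow> r' < n \<Longrightarrow> (\<Sum>l<n. R $$ (r,l) * R $$ (r',l)) = (if r = r' then 1 else 0)"
proof -
  from assms have o: "orthonormal_mat n R" and R: "R \<in> carrier_mat n n"
    and A: "A = R * diag_fun_mat n \<mu> * transpose_mat R"
    unfolding spectral_decomp_def orthonormal_mat_def by auto
  have D: "diag_fun_mat n \<mu> \<in> carrier_mat n n" unfolding diag_fun_mat_def by simp
  show "R \<in> carrier_mat n n" by fact
  show "A \<in> carrier_mat n n" unfolding A
    by (rule mult_carrier_mat[OF mult_carrier_mat[OF R D]]) (use R in simp)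
  show "\<And>r c. r < n \<Longrightarrow> c < n \<Longrightarrow> A $$ (r,c) = (\<Sum>l<n. R $$ (r,l) * \<mu> l * R $$ (c,l))"
    unfolding A by (rule index_diag_conj[OF R])
  show "\<And>l l'. l < n \<Longrightarrow> l' < n \<Longrightarrow> (\<Sum>r<n. R $$ (r,l) * R $$ (r,l')) = (if l = l' then 1 else 0)"
    by (rule orthonormal_mat_cols[OF o])
  show "\<And>r r'. r < n \<Longrightarrow> r' < n \<Longrightarrow> (\<Sum>l<n. R $$ (r,l) * R $$ (r',l)) = (if r = r' then 1 else 0)"
    by (rule orthonormal_mat_rows[OF o])
qed

lemma spectral_decomp_symmetric:
  assumes "spectral_decomp n A R \<mu>" "r < n" "c < n"
  shows "A $$ (r,c) = A $$ (c,r)"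
  using spectral_decomp_entries(3)[OF assms(1)] assms(2,3) by (simp add: mult_ac)


lemma symmetric_eigenvalue_real:
  fixes A :: "real mat" and w :: "nat \<Rightarrow> complex"
  assumes sym: "\<And>r c. r < n \<Longrightarrow> c < n \<Longrightarrow> A $$ (r,c) = A $$ (c,r)"
    and eig: "\<And>r. r < n \<Longrightarrow> (\<Sum>c<n. complex_of_real (A $$ (r,c)) * w c) = z * w r"
    and r0: "r0 < n" "w r0 \<noteq> 0"
  shows "Im z = 0"
proof -
  \<comment> \<open>The Rayleigh quotient \<open>w\<^sup>* A w / w\<^sup>* w\<close> of a real symmetric \<open>A\<close> is real.\<close>
  define N where "N = (\<Sum>r<n. cnj (w r) * w r)"
  define S where "S = (\<Sum>r<n. cnj (w r) * (\<Sum>c<n. complex_of_real (A $$ (r,c)) * w c))"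
  have "S = (\<Sum>r<n. cnj (w r) * (z * w r))" unfolding S_def by (intro sum.cong refl) (simp add: eig)
  hence SN: "S = z * N" unfolding N_def by (simp add: sum_distrib_left mult_ac)
  have "cnj S = (\<Sum>r<n. \<Sum>c<n. w r * (complex_of_real (A $$ (r,c)) * cnj (w c)))"
    unfolding S_def by (simp add: sum_distrib_left)
  also have "\<dots> = (\<Sum>c<n. \<Sum>r<n. w r * (complex_of_real (A $$ (r,c)) * cnj (w c)))"
    by (rule sum.swap)
  also have "\<dots> = S" unfolding S_def sum_distrib_left
    by (intro sum.cong refl) (simp add: sym mult_ac)
  finally have cS: "cnj S = S" .
  have NR: "N = complex_of_real (\<Sum>r<n. (cmod (w r))^2)"
    unfolding N_def of_real_sum
    by (intro sum.cong refl) (simp add: complex_norm_square mult.commute del: of_real_power)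
  have "(\<Sum>r<n. (cmod (w r))^2) > 0"
    by (rule sum_pos2[of _ r0]) (use r0 in auto)
  hence N0: "N \<noteq> 0" unfolding NR by (metis less_irrefl of_real_eq_0_iff)
  have "cnj N = N" unfolding NR by (rule complex_cnj_complex_of_real)
  with cS SN have "cnj z * N = z * N" by (metis complex_cnj_mult)
  with N0 have "cnj z = z" by simp
  then show ?thesis by (metis Reals_cnj_iff complex_is_Real_iff)
qed

lemma complex_eigenvector_exists:
  fixes A :: "real mat"
  assumes A: "A \<in> carrier_mat n n" and n: "n > 0"
  obtains z :: complex and w r0 where "r0 < n" "w r0 \<noteq> 0"
    "\<And>r. r < n \<Longrightarrow> (\<Sum>c<n. complex_of_real (A $$ (r,c)) * w c) = z * w r"
proof -
  define Ac where "Ac = map_mat complex_of_real A"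
  have Ac: "Ac \<in> carrier_mat n n" using A unfolding Ac_def by auto
  have "degree (char_poly Ac) = n" using degree_monic_char_poly[OF Ac] by simp
  hence "\<not> constant (poly (char_poly Ac))" using n by (simp add: constant_degree)
  from fundamental_theorem_of_algebra[OF this] obtain z where "poly (char_poly Ac) z = 0" by auto
  hence "eigenvalue Ac z" using eigenvalue_root_char_poly[OF Ac] by simp
  then obtain w where "eigenvector Ac w z" unfolding eigenvalue_def by auto
  hence w: "w \<in> carrier_vec n" "w \<noteq> 0\<^sub>v n" "Ac *\<^sub>v w = z \<cdot>\<^sub>v w"
    unfolding eigenvector_def using Ac by auto
  have eq: "(\<Sum>c<n. complex_of_real (A $$ (r,c)) * w $ c) = z * w $ r" if r: "r < n" for r
  proof -
    have "(Ac *\<^sub>v w) $ r = z * w $ r" using w r by simp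
    moreover have "(Ac *\<^sub>v w) $ r = (\<Sum>c<n. complex_of_real (A $$ (r,c)) * w $ c)"
      using r A w(1) Ac by (simp add: scalar_prod_def atLeast0LessThan Ac_def)
    ultimately show ?thesis by simp
  qed
  obtain r0 where "r0 < n" "w $ r0 \<noteq> 0"
    using w(1,2) by (metis eq_vecI carrier_vecD index_zero_vec)
  from that[OF this eq] show ?thesis .
qed

lemma symmetric_real_eigenvector:
  fixes A :: "real mat"
  assumes A: "A \<in> carrier_mat n n"
    and sym: "\<And>r c. r < n \<Longrightarrow> c < n \<Longrightarrow> A $$ (r,c) = A $$ (c,r)"
    and n: "n > 0"
  shows "\<exists>lam v. (\<exists>r<n. v r \<noteq> 0) \<and> (\<forall>r<n. (\<Sum>c<n. A $$ (r,c) * v c) = lam * v r)"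
proof -
  obtain z w r0 where r0: "r0 < n" "w r0 \<noteq> 0"
    and eq: "\<And>r. r < n \<Longrightarrow> (\<Sum>c<n. complex_of_real (A $$ (r,c)) * w c) = z * w r"
    by (rule complex_eigenvector_exists[OF A n]) blast
  have Imz: "Im z = 0" by (rule symmetric_eigenvalue_real[OF sym eq r0]) auto
  have re: "(\<Sum>c<n. A $$ (r,c) * Re (w c)) = Re z * Re (w r)"
    and im: "(\<Sum>c<n. A $$ (r,c) * Im (w c)) = Re z * Im (w r)" if r: "r < n" for r
  proof -
    have "Re (\<Sum>c<n. complex_of_real (A $$ (r,c)) * w c) = (\<Sum>c<n. A $$ (r,c) * Re (w c))"
      by (simp add: Re_sum)
    moreover have "Im (\<Sum>c<n. complex_of_real (A $$ (r,c)) * w c) = (\<Sum>c<n. A $$ (r,c) * Im (w c))"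
      by (simp add: Im_sum)
    ultimately show "(\<Sum>c<n. A $$ (r,c) * Re (w c)) = Re z * Re (w r)"
      "(\<Sum>c<n. A $$ (r,c) * Im (w c)) = Re z * Im (w r)"
      using eq[OF r] Imz by auto
  qed
  show ?thesis
  proof (cases "Re (w r0) = 0")
    case False
    then show ?thesis using re r0 by (intro exI[of _ "Re z"] exI[of _ "\<lambda>c. Re (w c)"]) auto
  next
    case True
    hence "Im (w r0) \<noteq> 0" using r0 complex.expand by force
    then show ?thesis using im r0 by (intro exI[of _ "Re z"] exI[of _ "\<lambda>c. Im (w c)"]) auto
  qed
qed

lemma symmetric_unit_eigenvector:
  fixes A :: "real mat"
  assumes A: "A \<in> carrier_mat n n"
    and sym: "\<And>r c. r < n \<Longrightarrow> c < n \<Longrightarrow> A $$ (r,c) = A $$ (c,r)"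
    and n: "n > 0"
  shows "\<exists>lam v. (\<Sum>r<n. (v r)^2) = 1 \<and> v 0 \<le> 0 \<and> (\<forall>r<n. (\<Sum>c<n. A $$ (r,c) * v c) = lam * v r)"
proof -
  from symmetric_real_eigenvector[OF A sym n] obtain lam u where u: "\<exists>r<n. u r \<noteq> 0"
    "\<forall>r<n. (\<Sum>c<n. A $$ (r,c) * u c) = lam * u r" by blast
  define s where "s = sqrt (\<Sum>r<n. (u r)^2)"
  from u(1) obtain r0 where r0: "r0 < n" "u r0 \<noteq> 0" by auto
  have upos: "(\<Sum>r<n. (u r)^2) > 0" using r0 by (intro sum_pos2[of _ r0]) auto
  hence s: "s > 0" "s^2 = (\<Sum>r<n. (u r)^2)" unfolding s_def by auto
  define sg :: real where "sg = (if u 0 > 0 then -1 else 1)"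
  have sg: "sg^2 = 1" unfolding sg_def by simp
  define v where "v = (\<lambda>r. sg * u r / s)"
  have "(\<Sum>r<n. (v r)^2) = (\<Sum>r<n. (u r)^2 * (sg^2 / s^2))"
    unfolding v_def by (intro sum.cong refl) (simp add: power_mult_distrib power_divide)
  also have "\<dots> = (\<Sum>r<n. (u r)^2) * (sg^2 / s^2)" by (rule sum_distrib_right[symmetric])
  also have "\<dots> = 1" using s sg upos by simp
  finally have "(\<Sum>r<n. (v r)^2) = 1" .
  moreover have "v 0 \<le> 0" unfolding v_def sg_def using s by (auto simp: divide_nonpos_pos)
  moreover have "(\<Sum>c<n. A $$ (r,c) * v c) = lam * v r" if "r < n" for r
  proof -
    have "(\<Sum>c<n. A $$ (r,c) * v c) = sg / s * (\<Sum>c<n. A $$ (r,c) * u c)"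
      unfolding v_def by (simp add: sum_distrib_left mult_ac)
    also have "\<dots> = lam * v r" using u(2) that unfolding v_def by simp
    finally show ?thesis .
  qed
  ultimately show ?thesis by blast
qed

lemma sum_delta_mult: "r < (n::nat) \<Longrightarrow> (\<Sum>l<n. (if r = l then 1 else 0) * f l) = (f r :: real)"
proof -
  have "(\<Sum>l<n. (if r = l then 1 else 0) * f l) = (\<Sum>l<n. if r = l then f l else 0)"
    by (rule sum.cong) auto
  then show "r < n \<Longrightarrow> ?thesis" by simp
qed

lemma sum_mult_delta: "r < (n::nat) \<Longrightarrow> (\<Sum>l<n. f l * (if l = r then 1 else 0)) = (f r :: real)"
proof -
  have "(\<Sum>l<n. f l * (if l = r then 1 else 0)) = (\<Sum>l<n. if l = r then f l else 0)"
    by (rule sum.cong) auto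
  then show "r < n \<Longrightarrow> ?thesis" by simp
qed

lemma reflection_mult_self:
  fixes w :: "nat \<Rightarrow> real"
  assumes w2: "(\<Sum>r<n. (w r)^2) = 2 * t" and t: "t \<noteq> 0"
  defines "H \<equiv> mat n n (\<lambda>(r,c). (if r = c then 1 else 0) - w r * w c / t)"
  shows "H * H = 1\<^sub>m n"
proof (intro eq_matI)
  have Hc: "H \<in> carrier_mat n n" unfolding H_def by simp
  fix r c assume "r < dim_row (1\<^sub>m n)" and "c < dim_col (1\<^sub>m n)"
  hence r: "r < n" and c: "c < n" by auto
  let ?d = "\<lambda>r c. if r = c then 1 else (0::real)"
  have "(H * H) $$ (r,c) = (\<Sum>l<n. (?d r l - w r * w l / t) * (?d l c - w l * w c / t))"
    unfolding index_mult_mat_sum[OF Hc Hc r c] by (intro sum.cong refl) (simp add: H_def r c)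
  also have "\<dots> = (\<Sum>l<n. ?d r l * ?d l c) - (\<Sum>l<n. ?d r l * (w l * w c / t))
      - (\<Sum>l<n. (w r * w l / t) * ?d l c) + (\<Sum>l<n. w r * w c / t^2 * (w l)^2)"
    by (simp add: sum.distrib sum_subtractf algebra_simps power2_eq_square)
  also have "\<dots> = ?d r c - w r * w c / t - w r * w c / t + w r * w c / t^2 * (2 * t)"
    by (simp only: sum_delta_mult[OF r] sum_mult_delta[OF c] sum_distrib_left[symmetric] w2)
  also have "\<dots> = ?d r c" using t by (simp add: power2_eq_square field_simps)
  finally show "(H * H) $$ (r,c) = 1\<^sub>m n $$ (r,c)" using r c by simp
qed (auto simp: H_def)

lemma householder_reflection:
  fixes v :: "nat \<Rightarrow> real"
  assumes n: "n > 0" and v1: "(\<Sum>r<n. (v r)^2) = 1" and v0: "v 0 \<le> 0"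
  shows "\<exists>H. H \<in> carrier_mat n n \<and> transpose_mat H = H \<and> H * H = 1\<^sub>m n \<and> (\<forall>r<n. H $$ (r,0) = v r)"
proof -
  \<comment> \<open>Reflection in the hyperplane orthogonal to \<open>v - e\<^sub>0\<close>; \<open>v 0 \<le> 0\<close> keeps \<open>v \<noteq> e\<^sub>0\<close>.\<close>
  define t where "t = 1 - v 0"
  have t: "t \<ge> 1" using v0 unfolding t_def by simp
  define w where "w = (\<lambda>r. v r - (if r = 0 then 1 else 0))"
  have w2: "(\<Sum>r<n. (w r)^2) = 2 * t"
  proof -
    obtain m where m: "n = Suc m" using n by (cases n) auto
    have "(\<Sum>r<n. (w r)^2) = (v 0 - 1)^2 + (\<Sum>r<m. (v (Suc r))^2)"
      unfolding m sum.lessThan_Suc_shift w_def by simp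
    moreover have "1 = (v 0)^2 + (\<Sum>r<m. (v (Suc r))^2)"
      using v1 unfolding m sum.lessThan_Suc_shift by simp
    ultimately show ?thesis unfolding t_def by (simp add: power2_eq_square algebra_simps)
  qed
  define H where "H = mat n n (\<lambda>(r,c). (if r = c then 1 else 0) - w r * w c / t)"
  have "H \<in> carrier_mat n n" unfolding H_def by simp
  moreover have "transpose_mat H = H" unfolding H_def by (intro eq_matI) auto
  moreover have "H * H = 1\<^sub>m n" unfolding H_def using t by (intro reflection_mult_self[OF w2]) simp
  moreover have "H $$ (r,0) = v r" if "r < n" for r
  proof -
    have "H $$ (r,0) = (if r = 0 then 1 else 0) - w r * (v 0 - 1) / t"
      using that n unfolding H_def w_def by simp
    also have "\<dots> = v r" using t unfolding t_def w_def by (simp add: field_simps)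
    finally show ?thesis .
  qed
  ultimately show ?thesis by blast
qed


lemma orthonormal_mat_extend:
  assumes "orthonormal_mat m R1"
  shows "orthonormal_mat (Suc m)
           (mat (Suc m) (Suc m) (\<lambda>(r,l). if r = 0 \<or> l = 0 then (if r = l then 1 else 0)
                                           else R1 $$ (r - 1, l - 1)))"
    (is "orthonormal_mat _ ?R")
proof (rule orthonormal_matI_cols)
  fix l l' assume l: "l < Suc m" "l' < Suc m"
  have "(\<Sum>r<Suc m. ?R $$ (r,l) * ?R $$ (r,l'))
      = ?R $$ (0,l) * ?R $$ (0,l') + (\<Sum>r<m. ?R $$ (Suc r,l) * ?R $$ (Suc r,l'))"
    by (rule sum.lessThan_Suc_shift)
  also have "\<dots> = (if l = l' then 1 else 0)"
  proof (cases "l = 0 \<or> l' = 0")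
    case True
    then show ?thesis using l by auto
  next
    case False
    then obtain a b where ab: "l = Suc a" "l' = Suc b" by (meson not0_implies_Suc)
    have "(\<Sum>r<m. ?R $$ (Suc r,l) * ?R $$ (Suc r,l')) = (\<Sum>r<m. R1 $$ (r,a) * R1 $$ (r,b))"
      by (intro sum.cong refl) (use l ab in simp)
    also have "\<dots> = (if a = b then 1 else 0)"
      using orthonormal_mat_cols[OF assms, of a b] l ab by simp
    finally show ?thesis using l ab by simp
  qed
  finally show "(\<Sum>r<Suc m. ?R $$ (r,l) * ?R $$ (r,l')) = (if l = l' then 1 else 0)" .
qed simp

lemma spectral_decomp_extend:
  assumes C: "C \<in> carrier_mat (Suc m) (Suc m)"
    and C0: "\<And>r. r < Suc m \<Longrightarrow> C $$ (r,0) = (if r = 0 then lam else 0)"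
    and Csym: "\<And>r c. r < Suc m \<Longrightarrow> c < Suc m \<Longrightarrow> C $$ (r,c) = C $$ (c,r)"
    and B: "spectral_decomp m (mat m m (\<lambda>(r,c). C $$ (Suc r, Suc c))) R1 \<mu>1"
  shows "spectral_decomp (Suc m) C
           (mat (Suc m) (Suc m) (\<lambda>(r,l). if r = 0 \<or> l = 0 then (if r = l then 1 else 0)
                                           else R1 $$ (r - 1, l - 1)))
           (\<lambda>l. if l = 0 then lam else \<mu>1 (l - 1))"
    (is "spectral_decomp _ _ ?R ?\<mu>")
proof -
  note e1 = spectral_decomp_entries[OF B]
  have o: "orthonormal_mat (Suc m) ?R"
    using B unfolding spectral_decomp_def by (intro orthonormal_mat_extend) simp
  have Rc: "?R \<in> carrier_mat (Suc m) (Suc m)" by simp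
  have "C = ?R * diag_fun_mat (Suc m) ?\<mu> * transpose_mat ?R"
  proof (intro eq_matI)
    fix r c assume "r < dim_row (?R * diag_fun_mat (Suc m) ?\<mu> * transpose_mat ?R)"
      "c < dim_col (?R * diag_fun_mat (Suc m) ?\<mu> * transpose_mat ?R)"
    hence rc: "r < Suc m" "c < Suc m" by auto
    have "(?R * diag_fun_mat (Suc m) ?\<mu> * transpose_mat ?R) $$ (r,c)
        = ?R $$ (r,0) * ?\<mu> 0 * ?R $$ (c,0)
          + (\<Sum>l<m. ?R $$ (r,Suc l) * ?\<mu> (Suc l) * ?R $$ (c,Suc l))"
      unfolding index_diag_conj[OF Rc rc] by (rule sum.lessThan_Suc_shift)
    also have "\<dots> = C $$ (r,c)"
    proof (cases "r = 0 \<or> c = 0")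
      case True
      then show ?thesis using rc C0[of c] C0[of r] Csym[of 0 c] by auto
    next
      case False
      then obtain a b where ab: "r = Suc a" "c = Suc b" by (meson not0_implies_Suc)
      have "(\<Sum>l<m. ?R $$ (r,Suc l) * ?\<mu> (Suc l) * ?R $$ (c,Suc l))
          = (\<Sum>l<m. R1 $$ (a,l) * \<mu>1 l * R1 $$ (b,l))"
        by (intro sum.cong refl) (use rc ab in simp)
      also have "\<dots> = C $$ (r,c)" using e1(3)[of a b] rc ab by simp
      finally show ?thesis using ab rc by simp
    qed
    finally show "C $$ (r,c) = (?R * diag_fun_mat (Suc m) ?\<mu> * transpose_mat ?R) $$ (r,c)" by simp
  qed (use C in auto)
  with o show ?thesis unfolding spectral_decomp_def by blast
qed

lemma spectral_decomp_conj_involution: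
  assumes H: "H \<in> carrier_mat n n" "transpose_mat H = H" "H * H = 1\<^sub>m n"
    and A: "A \<in> carrier_mat n n"
    and HAH: "spectral_decomp n (H * A * H) R \<mu>"
  shows "spectral_decomp n A (H * R) \<mu>"
proof -
  from HAH have R: "R \<in> carrier_mat n n" and RTR: "transpose_mat R * R = 1\<^sub>m n"
    and eq: "H * A * H = R * diag_fun_mat n \<mu> * transpose_mat R"
    unfolding spectral_decomp_def orthonormal_mat_def by auto
  have D: "diag_fun_mat n \<mu> \<in> carrier_mat n n" unfolding diag_fun_mat_def by simp
  have T: "transpose_mat (H * R) = transpose_mat R * H"
    using H R by (simp add: transpose_mult[of _ n n _ n])
  have RT: "transpose_mat R \<in> carrier_mat n n" using R by simp
  have HHX: "H * (H * X) = X" if "X \<in> carrier_mat n n" for X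
    using H that by (simp add: assoc_mult_mat[symmetric, of H n n H n X n])
  have "transpose_mat (H * R) * (H * R) = transpose_mat R * (H * (H * R))"
    unfolding T using H R RT by (simp add: assoc_mult_mat[of _ n n _ n _ n])
  also have "\<dots> = 1\<^sub>m n" unfolding HHX[OF R] by (rule RTR)
  finally have o1: "transpose_mat (H * R) * (H * R) = 1\<^sub>m n" .
  have o2: "(H * R) * transpose_mat (H * R) = 1\<^sub>m n"
    by (rule mat_mult_left_right_inverse[OF _ _ o1]) (use H R in auto)
  have "(H * R) * diag_fun_mat n \<mu> * transpose_mat (H * R)
      = H * (R * diag_fun_mat n \<mu> * transpose_mat R) * H"
    unfolding T using H R RT D by (simp add: assoc_mult_mat[of _ n n _ n _ n])
  also have "\<dots> = A"
    unfolding eq[symmetric] using H A by (simp add: assoc_mult_mat[of _ n n _ n _ n] HHX)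
  finally show ?thesis
    unfolding spectral_decomp_def orthonormal_mat_def using H R o1 o2 by simp
qed

lemma involution_conj_first_column:
  fixes A H :: "real mat"
  assumes H: "H \<in> carrier_mat n n" "H * H = 1\<^sub>m n" and A: "A \<in> carrier_mat n n" and n: "n > 0"
    and eig: "\<And>p. p < n \<Longrightarrow> (\<Sum>q<n. A $$ (p,q) * H $$ (q,0)) = lam * H $$ (p,0)"
    and r: "r < n"
  shows "(H * A * H) $$ (r,0) = (if r = 0 then lam else 0)"
proof -
  have "(H * A * H) $$ (r,0) = (\<Sum>p<n. H $$ (r,p) * (A * H) $$ (p,0))"
    using index_mult_mat_sum[OF H(1) mult_carrier_mat[OF A H(1)] r n] H A
    by (simp add: assoc_mult_mat[of _ n n _ n _ n])
  also have "\<dots> = (\<Sum>p<n. H $$ (r,p) * (lam * H $$ (p,0)))"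
    by (intro sum.cong refl) (simp add: index_mult_mat_sum[OF A H(1) _ n] eig)
  also have "\<dots> = lam * (H * H) $$ (r,0)"
    unfolding index_mult_mat_sum[OF H(1) H(1) r n] by (simp add: sum_distrib_left mult_ac)
  finally show ?thesis using H r n by simp
qed

theorem spectral_decomp_exists:
  assumes "A \<in> carrier_mat n n" and "\<And>r c. r < n \<Longrightarrow> c < n \<Longrightarrow> A $$ (r,c) = A $$ (c,r)"
  shows "\<exists>R \<mu>. spectral_decomp n A R \<mu>"
  using assms
proof (induction n arbitrary: A)
  case 0
  have "spectral_decomp 0 A (1\<^sub>m 0) (\<lambda>_. 0)"
    unfolding spectral_decomp_def orthonormal_mat_def diag_fun_mat_def
    using 0 by (auto intro!: eq_matI)
  then show ?case by blast
next
  case (Suc m A)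
  \<comment> \<open>Reflect a unit eigenvector onto \<open>e\<^sub>0\<close>, then recurse on the lower-right block.\<close>
  define n where "n = Suc m"
  have Ac: "A \<in> carrier_mat n n" and sym: "\<And>r c. r < n \<Longrightarrow> c < n \<Longrightarrow> A $$ (r,c) = A $$ (c,r)"
    using Suc.prems unfolding n_def by auto
  have n: "n > 0" unfolding n_def by simp
  from symmetric_unit_eigenvector[OF Ac sym n] obtain lam v where v: "(\<Sum>r<n. (v r)^2) = 1" "v 0 \<le> 0"
    "\<And>r. r < n \<Longrightarrow> (\<Sum>c<n. A $$ (r,c) * v c) = lam * v r" by blast
  from householder_reflection[OF n v(1,2)] obtain H where Hc: "H \<in> carrier_mat n n"
    and HT: "transpose_mat H = H" and HH: "H * H = 1\<^sub>m n"
    and Hv: "\<And>r. r < n \<Longrightarrow> H $$ (r,0) = v r" by blast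
  define C where "C = H * A * H"
  have Cc: "C \<in> carrier_mat n n" unfolding C_def using Hc Ac by simp
  have "transpose_mat A = A" using Ac sym by (intro eq_matI) auto
  hence "transpose_mat C = C"
    unfolding C_def using Hc Ac HT
    by (simp add: transpose_mult[of _ n n _ n] assoc_mult_mat[of _ n n _ n _ n])
  hence Csym: "C $$ (r,c) = C $$ (c,r)" if "r < n" "c < n" for r c
    using that Cc by (metis carrier_matD(1,2) index_transpose_mat(1))
  have C0: "C $$ (r,0) = (if r = 0 then lam else 0)" if "r < n" for r
    unfolding C_def by (rule involution_conj_first_column[OF Hc HH Ac n _ that]) (simp add: Hv v(3))
  define B where "B = mat m m (\<lambda>(r,c). C $$ (Suc r, Suc c))"
  have "B \<in> carrier_mat m m" unfolding B_def by simp
  moreover have "B $$ (r,c) = B $$ (c,r)" if "r < m" "c < m" for r c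
    using that Csym[of "Suc r" "Suc c"] unfolding B_def n_def by simp
  ultimately obtain R1 \<mu>1 where "spectral_decomp m B R1 \<mu>1" using Suc.IH by blast
  from spectral_decomp_extend[of C m lam, OF _ _ _ this[unfolded B_def]]
  obtain R \<mu> where "spectral_decomp n (H * A * H) R \<mu>"
    using Cc C0 Csym unfolding C_def n_def by blast
  from spectral_decomp_conj_involution[OF Hc HT HH Ac this] show ?case unfolding n_def by blast
qed


section \<open>Quadratic forms in an eigenbasis\<close>

definition quad_form :: "nat \<Rightarrow> (nat \<Rightarrow> nat \<Rightarrow> real) \<Rightarrow> (nat \<Rightarrow> real) \<Rightarrow> real" where
  "quad_form n M x = (\<Sum>r<n. \<Sum>c<n. x r * M r c * x c)"

lemma quad_form_eigenbasis:
  assumes "\<And>r c. r < n \<Longrightarrow> c < n \<Longrightarrow> M r c = (\<Sum>l<n. R r l * \<mu> l * R c l)"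
  shows "quad_form n M x = (\<Sum>l<n. \<mu> l * (\<Sum>r<n. R r l * x r)^2)"
proof -
  have "quad_form n M x = (\<Sum>r<n. \<Sum>c<n. \<Sum>l<n. \<mu> l * (R r l * x r) * (R c l * x c))"
    unfolding quad_form_def
    by (intro sum.cong refl) (simp add: assms sum_distrib_left sum_distrib_right mult_ac)
  also have "\<dots> = (\<Sum>r<n. \<Sum>l<n. \<Sum>c<n. \<mu> l * (R r l * x r) * (R c l * x c))"
    by (rule sum.cong[OF refl], rule sum.swap)
  also have "\<dots> = (\<Sum>l<n. \<Sum>r<n. \<Sum>c<n. \<mu> l * (R r l * x r) * (R c l * x c))"
    by (rule sum.swap)
  also have "\<dots> = (\<Sum>l<n. \<mu> l * (\<Sum>r<n. R r l * x r)^2)"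
    by (simp only: power2_eq_square sum_product) (simp add: sum_distrib_left mult_ac)
  finally show ?thesis .
qed

lemma quad_form_add_diag_unit:
  assumes "i < n" "\<And>r c. r < n \<Longrightarrow> c < n \<Longrightarrow> M' r c = M r c + (if r = i \<and> c = i then 1 else 0)"
  shows "quad_form n M' x = quad_form n M x + (x i)^2"
proof -
  have "quad_form n M' x
      = (\<Sum>r<n. \<Sum>c<n. x r * M r c * x c + (if r = i \<and> c = i then x i * x i else 0))"
    unfolding quad_form_def by (intro sum.cong refl) (auto simp: assms(2) algebra_simps)
  also have "\<dots> = quad_form n M x + (\<Sum>r<n. \<Sum>c<n. (if r = i \<and> c = i then x i * x i else 0))"
    unfolding quad_form_def by (simp add: sum.distrib)
  also have "(\<Sum>r<n. \<Sum>c<n. (if r = i \<and> c = i then x i * x i else 0))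
      = (\<Sum>r<n. (if r = i then x i * x i else 0))"
    by (intro sum.cong refl) (use assms(1) in auto)
  also have "\<dots> = (x i)^2" using assms(1) by (simp add: power2_eq_square)
  finally show ?thesis .
qed

lemma sum_orthonormal_coord:
  fixes Q :: "nat \<Rightarrow> nat \<Rightarrow> real"
  assumes oQ: "\<And>l l'. l < n \<Longrightarrow> l' < n \<Longrightarrow> (\<Sum>r<n. Q r l * Q r l') = (if l = l' then 1 else 0)"
    and J: "J \<subseteq> {..<n}" and l: "l < n"
  shows "(\<Sum>r<n. Q r l * (\<Sum>j\<in>J. c j * Q r j)) = (if l \<in> J then c l else 0)"
proof -
  have "(\<Sum>r<n. Q r l * (\<Sum>j\<in>J. c j * Q r j)) = (\<Sum>j\<in>J. (\<Sum>r<n. Q r l * Q r j) * c j)"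
    by (rule sum_mult_combination_swap)
  also have "\<dots> = (\<Sum>j\<in>J. if l = j then c j else 0)"
    by (rule sum.cong[OF refl]) (use oQ l J in auto)
  also have "\<dots> = (if l \<in> J then c l else 0)"
    using finite_subset[OF J] by (subst sum.delta') auto
  finally show ?thesis .
qed

lemma quad_form_eigen_combination:
  fixes Q :: "nat \<Rightarrow> nat \<Rightarrow> real"
  assumes hA: "\<And>r c. r < n \<Longrightarrow> c < n \<Longrightarrow> M r c = (\<Sum>l<n. Q r l * lam l * Q c l)"
    and oQ: "\<And>l l'. l < n \<Longrightarrow> l' < n \<Longrightarrow> (\<Sum>r<n. Q r l * Q r l') = (if l = l' then 1 else 0)"
    and J: "J \<subseteq> {..<n}"
  shows "quad_form n M (\<lambda>r. \<Sum>j\<in>J. c j * Q r j) = (\<Sum>l\<in>J. lam l * (c l)^2)"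
proof -
  have "quad_form n M (\<lambda>r. \<Sum>j\<in>J. c j * Q r j)
      = (\<Sum>l<n. lam l * (\<Sum>r<n. Q r l * (\<Sum>j\<in>J. c j * Q r j))^2)"
    by (rule quad_form_eigenbasis[OF hA])
  also have "\<dots> = (\<Sum>l<n. if l \<in> J then lam l * (c l)^2 else 0)"
    by (intro sum.cong refl) (simp add: sum_orthonormal_coord[OF oQ J])
  also have "\<dots> = (\<Sum>l\<in>J. lam l * (c l)^2)"
    using J by (simp add: sum.inter_restrict[symmetric] Int_absorb1)
  finally show ?thesis .
qed

lemma combination_eliminate_coord:
  fixes Q :: "nat \<Rightarrow> nat \<Rightarrow> real" and c :: "nat \<Rightarrow> real"
  assumes fJ: "finite J" and jo: "jo \<notin> J" and q: "Q i jo \<noteq> 0"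
  defines "c' \<equiv> c(jo := - (\<Sum>j\<in>J. c j * Q i j) / Q i jo)"
  shows "(\<Sum>j\<in>J. c j * (Q r j - Q i j / Q i jo * Q r jo)) = (\<Sum>j\<in>insert jo J. c' j * Q r j)"
    and "(\<Sum>j\<in>insert jo J. c' j * Q i j) = 0"
    and "\<And>j. j \<in> J \<Longrightarrow> c' j = c j"
proof -
  have cJ: "(\<Sum>j\<in>J. c' j * Q r j) = (\<Sum>j\<in>J. c j * Q r j)" for r
    by (intro sum.cong refl) (use jo in \<open>auto simp: c'_def\<close>)
  have ins: "(\<Sum>j\<in>insert jo J. c' j * Q r j) = c' jo * Q r jo + (\<Sum>j\<in>J. c j * Q r j)" for r
    using fJ jo cJ by simp
  have "(\<Sum>j\<in>J. c j * (Q r j - Q i j / Q i jo * Q r jo))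
      = (\<Sum>j\<in>J. c j * Q r j - c j * Q i j * (Q r jo / Q i jo))"
    by (intro sum.cong refl) (simp add: algebra_simps)
  also have "\<dots> = (\<Sum>j\<in>J. c j * Q r j) - (\<Sum>j\<in>J. c j * Q i j) * (Q r jo / Q i jo)"
    by (simp only: sum_subtractf sum_distrib_right)
  also have "\<dots> = (\<Sum>j\<in>insert jo J. c' j * Q r j)" unfolding ins by (simp add: c'_def)
  finally show "(\<Sum>j\<in>J. c j * (Q r j - Q i j / Q i jo * Q r jo)) = (\<Sum>j\<in>insert jo J. c' j * Q r j)" .
  show "(\<Sum>j\<in>insert jo J. c' j * Q i j) = 0" unfolding ins using q by (simp add: c'_def)
  show "\<And>j. j \<in> J \<Longrightarrow> c' j = c j" using jo by (auto simp: c'_def)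
qed


section \<open>Inertia after adding \<open>e\<^sub>i e\<^sub>i\<^sup>T\<close> to a singular symmetric matrix\<close>

text \<open>
  \<open>A\<close> and \<open>A' = A + e\<^sub>i e\<^sub>i\<^sup>T\<close> are given through orthonormal eigenbases \<open>Q\<close>, \<open>R\<close>; column \<open>j0\<close> of
  \<open>Q\<close> is a kernel vector of \<open>A\<close> with nonzero \<open>i\<close>-th entry.
\<close>

locale diag_unit_update =
  fixes n :: nat and A A' Q R :: "nat \<Rightarrow> nat \<Rightarrow> real" and lam \<mu> :: "nat \<Rightarrow> real" and i j0 :: nat
  assumes A_eigen: "\<And>r c. r < n \<Longrightarrow> c < n \<Longrightarrow> A r c = (\<Sum>l<n. Q r l * lam l * Q c l)"
    and Q_orth: "\<And>l l'. l < n \<Longrightarrow> l' < n \<Longrightarrow> (\<Sum>r<n. Q r l * Q r l') = (if l = l' then 1 else 0)"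
    and A'_eigen: "\<And>r c. r < n \<Longrightarrow> c < n \<Longrightarrow> A' r c = (\<Sum>l<n. R r l * \<mu> l * R c l)"
    and R_orth: "\<And>r r'. r < n \<Longrightarrow> r' < n \<Longrightarrow> (\<Sum>l<n. R r l * R r' l) = (if r = r' then 1 else 0)"
    and A'_A: "\<And>r c. r < n \<Longrightarrow> c < n \<Longrightarrow> A' r c = A r c + (if r = i \<and> c = i then 1 else 0)"
    and i: "i < n"
    and j0: "j0 < n" "lam j0 = 0" "Q i j0 \<noteq> 0"
begin

lemma quad_form_A':
  "(\<Sum>l<n. \<mu> l * (\<Sum>r<n. R r l * x r)^2) = quad_form n A x + (x i)^2"
  using quad_form_eigenbasis[OF A'_eigen, where x = x] quad_form_add_diag_unit[OF i A'_A, where x = x]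
  by simp

lemma quad_form_A_combination:
  "J \<subseteq> {..<n} \<Longrightarrow> quad_form n A (\<lambda>r. \<Sum>j\<in>J. c j * Q r j) = (\<Sum>l\<in>J. lam l * (c l)^2)"
  by (rule quad_form_eigen_combination[OF A_eigen Q_orth])

lemma combination_nonzero:
  assumes J: "J \<subseteq> {..<n}" and j: "j \<in> J" "c j \<noteq> 0"
  shows "\<exists>r<n. (\<Sum>j\<in>J. c j * Q r j) \<noteq> 0"
proof (rule ccontr)
  assume "\<not> ?thesis"
  then have "(\<Sum>r<n. Q r j * (\<Sum>j\<in>J. c j * Q r j)) = 0" by simp
  moreover have "(\<Sum>r<n. Q r j * (\<Sum>j\<in>J. c j * Q r j)) = c j"
    using sum_orthonormal_coord[OF Q_orth J, of j c] J j by auto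
  ultimately show False using j by simp
qed

text \<open>
  \<open>corrected j\<close> is the eigenvector \<open>Q\<^sub>j\<close> minus the multiple of the kernel vector \<open>Q\<^sub>j\<^sub>0\<close> that
  kills its \<open>i\<close>-th entry; on the span of such vectors the quadratic forms of \<open>A'\<close> and \<open>A\<close> agree.
\<close>

definition corrected :: "nat \<Rightarrow> nat \<Rightarrow> real" where
  "corrected j r = Q r j - Q i j / Q i j0 * Q r j0"

lemma corrected_combination:
  assumes J: "J \<subseteq> {l. l < n \<and> l \<noteq> j0}"
  obtains c' where
    "\<And>r. (\<Sum>j\<in>J. c j * corrected j r) = (\<Sum>j\<in>insert j0 J. c' j * Q r j)"
    "(\<Sum>j\<in>insert j0 J. c' j * Q i j) = 0" "\<And>j. j \<in> J \<Longrightarrow> c' j = c j"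
proof -
  have "finite J" "j0 \<notin> J" using J finite_subset[of J "{..<n}"] by auto
  from combination_eliminate_coord[where Q = Q and i = i and jo = j0 and c = c, OF this j0(3)]
  show ?thesis
    using that unfolding corrected_def by blast
qed

lemma card_pos_ge: "card {l. l < n \<and> lam l > 0} + 1 \<le> card {l. l < n \<and> \<mu> l > 0}"
proof -
  let ?P = "{l. l < n \<and> lam l > 0}"
  have "card (insert j0 ?P) \<le> card {l. l < n \<and> \<mu> l > 0}"
  proof (rule card_le_card_pos_if_pos_on_span[where u="\<lambda>j r. Q r j" and R=R])
    fix c :: "nat \<Rightarrow> real" assume c: "\<exists>j\<in>insert j0 ?P. c j \<noteq> 0"
    let ?x = "\<lambda>r. \<Sum>j\<in>insert j0 ?P. c j * Q r j"
    have "(\<Sum>l<n. \<mu> l * (\<Sum>r<n. R r l * ?x r)^2) = (\<Sum>l\<in>?P. lam l * (c l)^2) + (?x i)^2"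
      unfolding quad_form_A' using j0 by (subst quad_form_A_combination) auto
    moreover have "(\<Sum>l\<in>?P. lam l * (c l)^2) \<ge> 0" by (intro sum_nonneg) auto
    moreover have "(\<Sum>l\<in>?P. lam l * (c l)^2) > 0 \<or> (?x i)^2 > 0"
    proof (cases "\<exists>j\<in>?P. c j \<noteq> 0")
      case True
      then obtain j where j: "j \<in> ?P" "c j \<noteq> 0" by blast
      have "(\<Sum>l\<in>?P. lam l * (c l)^2) > 0" by (rule sum_pos2[of _ j]) (use j in auto)
      then show ?thesis ..
    next
      case False
      with c have "c j0 \<noteq> 0" by auto
      moreover have "?x i = c j0 * Q i j0" using j0 False by simp
      ultimately show ?thesis using j0 by simp
    qed
    ultimately show "(\<Sum>l<n. \<mu> l * (\<Sum>r<n. R r l * ?x r)^2) > 0"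
      using zero_le_power2[of "?x i"] by linarith
  qed simp
  then show ?thesis using j0 by simp
qed

lemma card_pos_le: "card {l. l < n \<and> \<mu> l > 0} \<le> card {l. l < n \<and> lam l > 0} + 1"
proof -
  let ?J = "{l. l < n \<and> lam l \<le> 0} - {j0}"
  have "card {l. l < n \<and> \<mu> l > 0} + card ?J \<le> n"
  proof (rule card_pos_add_card_le_if_nonpos_on_span[where u=corrected, OF _ R_orth])
    fix c :: "nat \<Rightarrow> real"
    obtain c' where c': "\<And>r. (\<Sum>j\<in>?J. c j * corrected j r) = (\<Sum>j\<in>insert j0 ?J. c' j * Q r j)"
      "(\<Sum>j\<in>insert j0 ?J. c' j * Q i j) = 0" "\<And>j. j \<in> ?J \<Longrightarrow> c' j = c j"
      by (rule corrected_combination[of ?J c]) auto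
    have J: "insert j0 ?J \<subseteq> {..<n}" using j0 by auto
    show "\<exists>r<n. (\<Sum>j\<in>?J. c j * corrected j r) \<noteq> 0" if "\<exists>j\<in>?J. c j \<noteq> 0"
    proof -
      from that obtain j where "j \<in> ?J" "c j \<noteq> 0" by blast
      with c'(3) have "\<exists>r<n. (\<Sum>j\<in>insert j0 ?J. c' j * Q r j) \<noteq> 0"
        by (intro combination_nonzero[OF J, of j]) auto
      then show ?thesis by (simp only: c'(1))
    qed
    have "(\<Sum>l<n. \<mu> l * (\<Sum>r<n. R r l * (\<Sum>j\<in>?J. c j * corrected j r))^2)
        = (\<Sum>l\<in>insert j0 ?J. lam l * (c' l)^2)"
      unfolding c'(1) quad_form_A' quad_form_A_combination[OF J] c'(2) by simp
    also have "\<dots> \<le> 0" by (intro sum_nonpos) (use j0 in \<open>auto simp: mult_nonpos_nonneg\<close>)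
    finally show "(\<Sum>l<n. \<mu> l * (\<Sum>r<n. R r l * (\<Sum>j\<in>?J. c j * corrected j r))^2) \<le> 0" .
  qed simp
  moreover have "Suc (card ?J) = card {l. l < n \<and> lam l \<le> 0}"
    using j0 by (intro card_Suc_Diff1) auto
  moreover have "card {l. l < n \<and> lam l \<le> 0} + card {l. l < n \<and> lam l > 0} = n"
    using card_filter_add_card_filter_not[of n "\<lambda>l. lam l > 0"] by (simp add: not_less)
  ultimately show ?thesis by linarith
qed

lemma card_neg_ge: "card {l. l < n \<and> lam l < 0} \<le> card {l. l < n \<and> \<mu> l < 0}"
proof -
  let ?N = "{l. l < n \<and> lam l < 0}"
  have "card ?N \<le> card {l. l < n \<and> - \<mu> l > 0}"
  proof (rule card_le_card_pos_if_pos_on_span[where u=corrected and R=R])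
    fix c :: "nat \<Rightarrow> real" assume c: "\<exists>j\<in>?N. c j \<noteq> 0"
    obtain c' where c': "\<And>r. (\<Sum>j\<in>?N. c j * corrected j r) = (\<Sum>j\<in>insert j0 ?N. c' j * Q r j)"
      "(\<Sum>j\<in>insert j0 ?N. c' j * Q i j) = 0" "\<And>j. j \<in> ?N \<Longrightarrow> c' j = c j"
      by (rule corrected_combination[of ?N c]) (use j0 in auto)
    have J: "insert j0 ?N \<subseteq> {..<n}" using j0 by auto
    have "(\<Sum>l<n. - \<mu> l * (\<Sum>r<n. R r l * (\<Sum>j\<in>?N. c j * corrected j r))^2)
        = - (\<Sum>l\<in>insert j0 ?N. lam l * (c' l)^2)"
      using quad_form_A'[of "\<lambda>r. \<Sum>j\<in>?N. c j * corrected j r"]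
      unfolding c'(1) quad_form_A_combination[OF J] c'(2) by (simp add: sum_negf)
    also have "\<dots> = (\<Sum>l\<in>?N. - (lam l * (c l)^2))"
      using j0 c'(3) by (simp add: sum_negf)
    also have "\<dots> > 0"
    proof -
      obtain j where j: "j \<in> ?N" "c j \<noteq> 0" using c by blast
      show ?thesis
        by (rule sum_pos2[of _ j]) (use j in \<open>auto simp: mult_nonpos_nonneg mult_neg_pos\<close>)
    qed
    finally show "(\<Sum>l<n. - \<mu> l * (\<Sum>r<n. R r l * (\<Sum>j\<in>?N. c j * corrected j r))^2) > 0" .
  qed simp
  then show ?thesis by simp
qed

lemma card_neg_le: "card {l. l < n \<and> \<mu> l < 0} \<le> card {l. l < n \<and> lam l < 0}"
proof -
  let ?J = "{l. l < n \<and> lam l \<ge> 0}"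
  have J: "?J \<subseteq> {..<n}" by auto
  have "card {l. l < n \<and> - \<mu> l > 0} + card ?J \<le> n"
  proof (rule card_pos_add_card_le_if_nonpos_on_span[where u="\<lambda>j r. Q r j", OF _ R_orth])
    fix c :: "nat \<Rightarrow> real"
    show "\<exists>r<n. (\<Sum>j\<in>?J. c j * Q r j) \<noteq> 0" if "\<exists>j\<in>?J. c j \<noteq> 0"
      using that combination_nonzero[OF J] by blast
    have "(\<Sum>l\<in>?J. lam l * (c l)^2) \<ge> 0" by (intro sum_nonneg) auto
    then have "(\<Sum>l<n. \<mu> l * (\<Sum>r<n. R r l * (\<Sum>j\<in>?J. c j * Q r j))^2) \<ge> 0"
      unfolding quad_form_A' quad_form_A_combination[OF J] by simp
    then show "(\<Sum>l<n. - \<mu> l * (\<Sum>r<n. R r l * (\<Sum>j\<in>?J. c j * Q r j))^2) \<le> 0"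
      by (simp add: sum_negf)
  qed simp_all
  moreover have "card ?J + card {l. l < n \<and> lam l < 0} = n"
    using card_filter_add_card_filter_not[of n "\<lambda>l. lam l \<ge> 0"] by (simp add: not_le)
  ultimately show ?thesis by simp
qed

theorem card_pos_neg:
  "card {l. l < n \<and> \<mu> l > 0} = card {l. l < n \<and> lam l > 0} + 1 \<and>
   card {l. l < n \<and> \<mu> l < 0} = card {l. l < n \<and> lam l < 0}"
  using card_pos_ge card_pos_le card_neg_ge card_neg_le by linarith

end


section \<open>Changing one diagonal entry by \<open>\<pm>1\<close> in \<open>S(G)\<close>\<close>

lemma spectral_decomp_zero_eigenvalue:
  assumes "spectral_decomp n A Q lam" "n_plus A + n_minus A < n"
  obtains j where "j < n" "lam j = 0"
proof (rule ccontr)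
  assume "\<not> thesis"
  with that have "{l. l < n \<and> \<not> lam l > 0} = {l. l < n \<and> lam l < 0}" by force
  with card_filter_add_card_filter_not[of n "\<lambda>l. lam l > 0"] assms show False
    by (simp add: n_plus_spectral_decomp n_minus_spectral_decomp)
qed

lemma spectral_decomp_column_nonzero:
  assumes "spectral_decomp n A Q lam" "j < n"
  obtains i where "i < n" "Q $$ (i,j) \<noteq> 0"
proof (rule ccontr)
  assume "\<not> thesis"
  with that have "Q $$ (r,j) = 0" if "r < n" for r using that by blast
  then have "(\<Sum>r<n. Q $$ (r,j) * Q $$ (r,j)) = 0" by simp
  with spectral_decomp_entries(4)[OF assms(1) assms(2,2)] show False by simp
qed

lemma spectral_decomp_kernel_column:
  assumes sp: "spectral_decomp n A Q lam" and j: "j < n" "lam j = 0" and r: "r < n"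
  shows "(\<Sum>c<n. A $$ (r,c) * Q $$ (c,j)) = 0"
proof -
  note eQ = spectral_decomp_entries[OF sp]
  have "(\<Sum>c<n. A $$ (r,c) * Q $$ (c,j))
      = (\<Sum>c<n. \<Sum>l<n. Q $$ (r,l) * lam l * (Q $$ (c,l) * Q $$ (c,j)))"
    by (intro sum.cong refl) (simp add: eQ(3)[OF r] sum_distrib_right sum_distrib_left mult_ac)
  also have "\<dots> = (\<Sum>l<n. Q $$ (r,l) * lam l * (\<Sum>c<n. Q $$ (c,l) * Q $$ (c,j)))"
    by (subst sum.swap) (simp add: sum_distrib_left)
  also have "\<dots> = (\<Sum>l<n. if l = j then Q $$ (r,l) * lam l else 0)"
    by (intro sum.cong refl) (simp add: eQ(4) j)
  also have "\<dots> = 0" using j by simp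
  finally show ?thesis .
qed

definition diag_update :: "nat \<Rightarrow> real mat \<Rightarrow> nat \<Rightarrow> real \<Rightarrow> real mat" where
  "diag_update n A i s = mat n n (\<lambda>(r,c). A $$ (r,c) + (if r = i \<and> c = i then s else 0))"

lemma S_G_carrier_symmetric:
  assumes "A \<in> S_G n E"
  shows "A \<in> carrier_mat n n" "\<And>r c. r < n \<Longrightarrow> c < n \<Longrightarrow> A $$ (r,c) = A $$ (c,r)"
proof -
  from assms have A: "A \<in> carrier_mat n n" and "transpose_mat A = A"
    unfolding S_G_def sym_mat_def by auto
  then show "A \<in> carrier_mat n n" "\<And>r c. r < n \<Longrightarrow> c < n \<Longrightarrow> A $$ (r,c) = A $$ (c,r)"
    by (metis carrier_matD(1,2) index_transpose_mat(1))+
qed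

lemma diag_update_S_G:
  assumes "A \<in> S_G n E" "i < n"
  shows "diag_update n A i s \<in> S_G n E"
proof -
  from assms have "\<And>r c. r < n \<Longrightarrow> c < n \<Longrightarrow> r \<noteq> c \<Longrightarrow> (A $$ (r,c) \<noteq> 0 \<longleftrightarrow> E r c)"
    unfolding S_G_def by auto
  moreover have "transpose_mat (diag_update n A i s) = diag_update n A i s"
    unfolding diag_update_def by (intro eq_matI) (auto simp: S_G_carrier_symmetric(2)[OF assms(1)])
  ultimately show ?thesis unfolding S_G_def sym_mat_def diag_update_def by auto
qed

lemma kernel_vector_mult_left:
  fixes A X :: "real mat"
  assumes sym: "\<And>r c. r < n \<Longrightarrow> c < n \<Longrightarrow> A $$ (r,c) = A $$ (c,r)"
    and Av: "\<And>r. r < n \<Longrightarrow> (\<Sum>c<n. A $$ (r,c) * v c) = 0"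
  shows "(\<Sum>r<n. v r * (\<Sum>k<n. A $$ (r,k) * X $$ (k,c))) = 0"
proof -
  have "(\<Sum>r<n. v r * (\<Sum>k<n. A $$ (r,k) * X $$ (k,c))) = (\<Sum>r<n. \<Sum>k<n. v r * A $$ (r,k) * X $$ (k,c))"
    by (simp add: sum_distrib_left mult_ac)
  also have "\<dots> = (\<Sum>k<n. \<Sum>r<n. v r * A $$ (r,k) * X $$ (k,c))"
    by (rule sum.swap)
  also have "\<dots> = (\<Sum>k<n. (\<Sum>r<n. A $$ (k,r) * v r) * X $$ (k,c))"
  proof (intro sum.cong refl)
    fix k assume k: "k \<in> {..<n}"
    have "(\<Sum>r<n. v r * A $$ (r,k) * X $$ (k,c)) = (\<Sum>r<n. A $$ (k,r) * v r * X $$ (k,c))"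
      by (intro sum.cong refl) (use k sym in auto)
    then show "(\<Sum>r<n. v r * A $$ (r,k) * X $$ (k,c)) = (\<Sum>r<n. A $$ (k,r) * v r) * X $$ (k,c)"
      by (simp add: sum_distrib_right)
  qed
  also have "\<dots> = 0" by (simp add: Av)
  finally show ?thesis .
qed

lemma index_diag_update_mult:
  assumes X: "X \<in> carrier_mat n n" and i: "i < n" and r: "r < n" and c: "c < n"
  shows "(diag_update n A i s * X) $$ (r,c)
           = (\<Sum>k<n. A $$ (r,k) * X $$ (k,c)) + (if r = i then s * X $$ (i,c) else 0)"
proof -
  have A': "diag_update n A i s \<in> carrier_mat n n" unfolding diag_update_def by simp
  have "(diag_update n A i s * X) $$ (r,c) = (\<Sum>k<n. diag_update n A i s $$ (r,k) * X $$ (k,c))"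
    by (rule index_mult_mat_sum[OF A' X r c])
  also have "\<dots> = (\<Sum>k<n. A $$ (r,k) * X $$ (k,c) + (if r = i \<and> k = i then s * X $$ (i,c) else 0))"
    by (intro sum.cong refl) (use r in \<open>auto simp: diag_update_def algebra_simps\<close>)
  finally have "(diag_update n A i s * X) $$ (r,c)
      = (\<Sum>k<n. A $$ (r,k) * X $$ (k,c) + (if r = i \<and> k = i then s * X $$ (i,c) else 0))" .
  moreover have "(\<Sum>k<n. if r = i \<and> k = i then s * X $$ (i,c) else 0)
      = (if r = i then s * X $$ (i,c) else 0)"
    using i by (cases "r = i") auto
  ultimately show ?thesis by (simp only: sum.distrib)
qed

lemma hadamard_diag_update_eq_0:
  assumes A: "A \<in> carrier_mat n n" and X: "X \<in> carrier_mat n n" and i: "i < n"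
    and h1: "diag_update n A i s \<circ>\<^sub>H X = 0\<^sub>m n n" and h2: "1\<^sub>m n \<circ>\<^sub>H X = 0\<^sub>m n n"
  shows "A \<circ>\<^sub>H X = 0\<^sub>m n n"
proof (intro eq_matI)
  fix r c assume "r < dim_row (0\<^sub>m n n :: real mat)" "c < dim_col (0\<^sub>m n n :: real mat)"
  then have rc: "r < n" "c < n" by auto
  have "X $$ (i,i) = 0"
    using arg_cong[of _ _ "\<lambda>M. M $$ (i,i)", OF h2] i X by (simp add: hadamard_def)
  moreover have "diag_update n A i s $$ (r,c) * X $$ (r,c) = 0"
    using arg_cong[of _ _ "\<lambda>M. M $$ (r,c)", OF h1] rc by (simp add: hadamard_def diag_update_def)
  ultimately have "A $$ (r,c) * X $$ (r,c) = 0"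
    using rc by (cases "r = i \<and> c = i") (auto simp: diag_update_def)
  then show "(A \<circ>\<^sub>H X) $$ (r,c) = 0\<^sub>m n n $$ (r,c)" using A rc by (simp add: hadamard_def)
qed (use A in \<open>auto simp: hadamard_def\<close>)

lemma diag_update_SAP:
  fixes A :: "real mat" and v :: "nat \<Rightarrow> real"
  assumes A: "A \<in> carrier_mat n n"
    and sym: "\<And>r c. r < n \<Longrightarrow> c < n \<Longrightarrow> A $$ (r,c) = A $$ (c,r)"
    and sap: "SAP n A" and Av: "\<And>r. r < n \<Longrightarrow> (\<Sum>c<n. A $$ (r,c) * v c) = 0"
    and i: "i < n" and vi: "v i \<noteq> 0" and s: "s \<noteq> 0"
  shows "SAP n (diag_update n A i s)"
  unfolding SAP_def
proof (intro allI impI)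
  let ?A' = "diag_update n A i s"
  fix X assume h: "sym_mat n X \<and> ?A' \<circ>\<^sub>H X = 0\<^sub>m n n \<and> 1\<^sub>m n \<circ>\<^sub>H X = 0\<^sub>m n n \<and> ?A' * X = 0\<^sub>m n n"
  have X: "X \<in> carrier_mat n n" using h unfolding sym_mat_def by auto
  have prod: "(\<Sum>k<n. A $$ (r,k) * X $$ (k,c)) + (if r = i then s * X $$ (i,c) else 0) = 0"
    if "r < n" "c < n" for r c
  proof -
    have "(?A' * X) $$ (r,c) = 0" using h that by simp
    then show ?thesis unfolding index_diag_update_mult[OF X i that] .
  qed
  \<comment> \<open>Multiplying \<open>A' X = 0\<close> from the left by the kernel vector \<open>v\<^sup>T\<close> leaves \<open>s v\<^sub>i X\<^sub>i\<^sub>c = 0\<close>.\<close>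
  have row_i: "X $$ (i,c) = 0" if c: "c < n" for c
  proof -
    have "0 = (\<Sum>r<n. v r * ((\<Sum>k<n. A $$ (r,k) * X $$ (k,c)) + (if r = i then s * X $$ (i,c) else 0)))"
      using prod[OF _ c] by simp
    also have "\<dots> = (\<Sum>r<n. v r * (\<Sum>k<n. A $$ (r,k) * X $$ (k,c)))
        + (\<Sum>r<n. if r = i then v i * (s * X $$ (i,c)) else 0)"
      by (simp only: distrib_left sum.distrib) (intro arg_cong2[where f = "(+)"] sum.cong; simp)
    also have "\<dots> = (\<Sum>r<n. v r * (\<Sum>k<n. A $$ (r,k) * X $$ (k,c))) + v i * (s * X $$ (i,c))"
      using i by simp
    also have "\<dots> = v i * (s * X $$ (i,c))" by (simp add: kernel_vector_mult_left[OF sym Av])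
    finally show ?thesis using vi s by simp
  qed
  have "A \<circ>\<^sub>H X = 0\<^sub>m n n" using hadamard_diag_update_eq_0[OF A X i] h by blast
  moreover have "A * X = 0\<^sub>m n n"
  proof (intro eq_matI)
    fix r c assume "r < dim_row (0\<^sub>m n n :: real mat)" "c < dim_col (0\<^sub>m n n :: real mat)"
    hence r: "r < n" and c: "c < n" by auto
    show "(A * X) $$ (r,c) = 0\<^sub>m n n $$ (r,c)"
      using index_mult_mat_sum[OF A X r c] prod[OF r c] row_i[OF c] r c by (cases "r = i") auto
  qed (use A X in auto)
  ultimately show "X = 0\<^sub>m n n" using sap h unfolding SAP_def by blast
qed

lemma diag_update_spectral_decomp:
  assumes "spectral_decomp n A Q lam"
  obtains R \<mu> where "spectral_decomp n (diag_update n A i s) R \<mu>"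
proof -
  have "diag_update n A i s \<in> carrier_mat n n" unfolding diag_update_def by simp
  moreover have "diag_update n A i s $$ (r,c) = diag_update n A i s $$ (c,r)" if "r < n" "c < n" for r c
    using that spectral_decomp_symmetric[OF assms] unfolding diag_update_def by auto
  ultimately obtain R \<mu> where "spectral_decomp n (diag_update n A i s) R \<mu>"
    using spectral_decomp_exists by blast
  from that[OF this] show ?thesis .
qed

lemma pin_diag_update_plus:
  assumes sp: "spectral_decomp n A Q lam" and j0: "j0 < n" "lam j0 = 0"
    and i: "i < n" "Q $$ (i,j0) \<noteq> 0"
  shows "pin (diag_update n A i 1) = (n_plus A + 1, n_minus A)"
proof -
  note eQ = spectral_decomp_entries[OF sp]
  obtain R \<mu> where spR: "spectral_decomp n (diag_update n A i 1) R \<mu>"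
    using diag_update_spectral_decomp[OF sp] .
  note eR = spectral_decomp_entries[OF spR]
  interpret diag_unit_update n "\<lambda>r c. A $$ (r,c)" "\<lambda>r c. diag_update n A i 1 $$ (r,c)"
    "\<lambda>r l. Q $$ (r,l)" "\<lambda>r l. R $$ (r,l)" lam \<mu> i j0
    by unfold_locales (fact eQ(3) eQ(4) eR(3) eR(5) i j0 | simp add: diag_update_def)+
  show ?thesis
    using card_pos_neg
    unfolding pin_def n_plus_spectral_decomp[OF sp] n_minus_spectral_decomp[OF sp]
      n_plus_spectral_decomp[OF spR] n_minus_spectral_decomp[OF spR] by simp
qed

lemma pin_diag_update_minus:
  assumes sp: "spectral_decomp n A Q lam" and j0: "j0 < n" "lam j0 = 0"
    and i: "i < n" "Q $$ (i,j0) \<noteq> 0"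
  shows "pin (diag_update n A i (-1)) = (n_plus A, n_minus A + 1)"
proof -
  note eQ = spectral_decomp_entries[OF sp]
  obtain R \<mu> where spR: "spectral_decomp n (diag_update n A i (-1)) R \<mu>"
    using diag_update_spectral_decomp[OF sp] .
  note eR = spectral_decomp_entries[OF spR]
  \<comment> \<open>Negating both matrices turns \<open>A - e\<^sub>i e\<^sub>i\<^sup>T\<close> into \<open>-A + e\<^sub>i e\<^sub>i\<^sup>T\<close>.\<close>
  interpret diag_unit_update n "\<lambda>r c. - A $$ (r,c)" "\<lambda>r c. - diag_update n A i (-1) $$ (r,c)"
    "\<lambda>r l. Q $$ (r,l)" "\<lambda>r l. R $$ (r,l)" "\<lambda>l. - lam l" "\<lambda>l. - \<mu> l" i j0
  proof unfold_locales
    show "- A $$ (r,c) = (\<Sum>l<n. Q $$ (r,l) * - lam l * Q $$ (c,l))" if "r < n" "c < n" for r c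
      using eQ(3)[OF that] by (simp add: sum_negf)
    show "- diag_update n A i (-1) $$ (r,c) = (\<Sum>l<n. R $$ (r,l) * - \<mu> l * R $$ (c,l))"
      if "r < n" "c < n" for r c
      using eR(3)[OF that] by (simp add: sum_negf)
    show "- diag_update n A i (-1) $$ (r,c) = - A $$ (r,c) + (if r = i \<and> c = i then 1 else 0)"
      if "r < n" "c < n" for r c
      using that by (simp add: diag_update_def)
  qed (fact eQ(4) eR(5) i j0 | simp)+
  have neg_pos: "{l. l < n \<and> - f l > 0} = {l. l < n \<and> f l < 0}"
    and neg_neg: "{l. l < n \<and> - f l < 0} = {l. l < n \<and> f l > 0}" for f :: "nat \<Rightarrow> real"
    by auto
  show ?thesis
    using card_pos_neg
    unfolding pin_def n_plus_spectral_decomp[OF sp] n_minus_spectral_decomp[OF sp]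
      n_plus_spectral_decomp[OF spR] n_minus_spectral_decomp[OF spR] neg_pos neg_neg by simp
qed

theorem corollary3p5:
  fixes n a b :: nat and E :: "nat \<Rightarrow> nat \<Rightarrow> bool" and A :: "real mat"
  assumes "simple_graph_on n E"
    and "A \<in> S_G n E" and "SAP n A"
    and "pin A = (a, b)" and "a + b < n"
  shows "(\<exists>A' \<in> S_G n E. SAP n A' \<and> pin A' = (a + 1, b))
       \<and> (\<exists>A' \<in> S_G n E. SAP n A' \<and> pin A' = (a, b + 1))"
proof -
  note A = S_G_carrier_symmetric[OF assms(2)]
  obtain Q lam where sp: "spectral_decomp n A Q lam"
    using spectral_decomp_exists[OF A] by blast
  obtain j0 where j0: "j0 < n" "lam j0 = 0"
    using spectral_decomp_zero_eigenvalue[OF sp] assms(4,5) unfolding pin_def by auto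
  obtain i where i: "i < n" "Q $$ (i,j0) \<noteq> 0"
    using spectral_decomp_column_nonzero[OF sp j0(1)] by blast
  have SAP: "SAP n (diag_update n A i s)" if "s \<noteq> 0" for s
    using diag_update_SAP[OF A assms(3) spectral_decomp_kernel_column[OF sp j0] i that] .
  have ab: "n_plus A = a" "n_minus A = b" using assms(4) unfolding pin_def by auto
  note update = diag_update_S_G[OF assms(2) i(1)] SAP pin_diag_update_plus[OF sp j0 i, unfolded ab]
    pin_diag_update_minus[OF sp j0 i, unfolded ab]
  show ?thesis
    by (intro conjI bexI[of _ "diag_update n A i 1"] bexI[of _ "diag_update n A i (-1)"])
      (simp_all add: update)
qed

end
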